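(* Let $K\ge0$ and $p\in(1,2)$. Then there exists $\varepsilon\in(0,\frac{p-1}{2})$ (depending on $K$ and $p$) such that for all $a,b\in\mathbb R^d$, $$\Psi(a,b,p)\ge\Gamma(a,b,K,\varepsilon,p),$$ where $$\Psi(a,b,p)=|a+b|^p-|a|^p-p|a|^{p-2}\langle a,b\rangle\mathbf 1_{a\ne0},$$ $$\Gamma(a,b,K,\varepsilon,p)=2Kp|a|^{p-1}|b|\mathbf 1_{|b|\ge\vartheta(\varepsilon,p)|a|}+p\varepsilon|a|^{p-2}|b|^2\mathbf 1_{|b|<\vartheta(\varepsilon,p)|a|},$$ $$\vartheta(\varepsilon,p)=\sqrt{\frac12\Big(\frac{p-1}{2\varepsilon}\Big)^{\frac{2}{2-p}}+\frac12}-1.$$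
   Context: In $\Gamma$, when $a=0$ the second indicator vanishes and $|a|^{p-1}=0$, so $\Gamma(0,b,K,\varepsilon,p)=0$ for $b\neq 0$ interpreted via the first term (which equals $0$). *)

theory Defs
  imports "HOL-Analysis.Analysis"
begin

definition vartheta :: "real \<Rightarrow> real \<Rightarrow> real" where
  "vartheta \<epsilon> p = sqrt (1/2 * ((p - 1) / (2 * \<epsilon>)) powr (2 / (2 - p)) + 1/2) - 1"

definition Psi :: "real ^ 'd \<Rightarrow> real ^ 'd \<Rightarrow> real \<Rightarrow> real" where
  "Psi a b p = norm (a + b) powr p - norm a powr p
     - (if a \<noteq> 0 then p * norm a powr (p - 2) * (a \<bullet> b) else 0)"

definition Gamma :: "real ^ 'd \<Rightarrow> real ^ 'd \<Rightarrow> real \<Rightarrow> real \<Rightarrow> real \<Rightarrow> real" where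
  "Gamma a b K \<epsilon> p =
     (if norm b \<ge> vartheta \<epsilon> p * norm a then 2 * K * p * norm a powr (p - 1) * norm b else 0)
   + (if norm b < vartheta \<epsilon> p * norm a then p * \<epsilon> * norm a powr (p - 2) * (norm b)\<^sup>2 else 0)"

end

theory Submission imports Defs begin

text \<open>Scale so that \<open>|a| = 1\<close> and put \<open>s = |b|\<close>, \<open>w = |a + b| \<in> [|1 - s|, 1 + s]\<close>.
Expanding \<open>\<langle>a, b\<rangle>\<close> through \<open>w\<^sup>2\<close> gives \<open>\<Psi> = w\<^sup>p - p w\<^sup>2/2 + p (1 + s\<^sup>2)/2 - 1\<close>,
and as \<open>x\<^sup>p - p x\<^sup>2/2\<close> increases up to \<open>1\<close> and decreases afterwards, \<open>\<Psi>\<close> is at least its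
value at \<open>w = |1 \<plusminus> s|\<close>. A derivative comparison bounds both of these values below by
\<open>p (p - 1)/2 \<cdot> s\<^sup>2 (1 + s)\<^sup>p\<^sup>-\<^sup>2\<close>. This bound is of order \<open>s\<^sup>p\<close> for large \<open>s\<close>, so it dominates
\<open>2Kp s\<close> beyond some threshold \<open>\<theta>\<close>, and below \<open>\<vartheta>(\<epsilon>, p)\<close> it dominates \<open>p\<epsilon> s\<^sup>2\<close> because
\<open>\<epsilon>\<close> is defined from \<open>\<vartheta>\<close>; it remains to pick \<open>\<epsilon>\<close> with \<open>\<vartheta>(\<epsilon>, p) \<ge> \<theta>\<close>.\<close>

lemma Bernoulli_inequality_powr:
  fixes r x :: real
  assumes "0 \<le> r" "r \<le> 1" "x > -1"
  shows "(1 + x) powr r \<le> 1 + r * x"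
proof -
  have "(1 + x) powr r * 1 powr (1 - r) \<le> r * (1 + x) + (1 - r) * 1"
    by (rule Youngs_inequality_0) (use assms in auto)
  then show ?thesis by (simp add: algebra_simps)
qed

lemma powr_add_le_add_powr:
  fixes a b q :: real
  assumes "0 \<le> a" "0 \<le> b" "0 < q" "q \<le> 1"
  shows "(a + b) powr q \<le> a powr q + b powr q"
proof (cases "a + b = 0")
  case True
  then show ?thesis using assms by auto
next
  case False
  then have ab: "a + b > 0" using assms by auto
  have summand: "x * (a + b) powr (q - 1) \<le> x powr q" if "0 \<le> x" "x \<le> a + b" for x
  proof (cases "x = 0")
    case False
    then have "(a + b) powr (q - 1) \<le> x powr (q - 1)"
      by (intro powr_mono2') (use assms that in auto)
    then have "x * (a + b) powr (q - 1) \<le> x * x powr (q - 1)"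
      using that by (intro mult_left_mono) auto
    also have "x * x powr (q - 1) = x powr q"
      using False that by (simp add: powr_diff)
    finally show ?thesis .
  qed simp
  have "(a + b) powr q = (a + b) * (a + b) powr (q - 1)"
    using ab by (simp add: powr_diff)
  then have "(a + b) powr q = a * (a + b) powr (q - 1) + b * (a + b) powr (q - 1)"
    by (simp add: distrib_right)
  then show ?thesis using summand[of a] summand[of b] assms by linarith
qed

lemma power2_mult_powr:
  fixes s e :: real
  assumes "s > 0"
  shows "s\<^sup>2 * s powr e = s powr (e + 2)"
  using assms by (simp add: powr_add)

lemma powr_le_powr_of_square_le:
  fixes x M e :: real
  assumes "0 < x" "x\<^sup>2 \<le> M" "e \<le> 0"
  shows "M powr (e / 2) \<le> x powr e"
proof -
  have "M powr (e / 2) \<le> (x\<^sup>2) powr (e / 2)"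
    by (rule powr_mono2') (use assms in auto)
  also have "(x\<^sup>2) powr (e / 2) = x powr e"
    using assms by (simp add: powr_powr flip: powr_numeral)
  finally show ?thesis .
qed

lemma powr_minus_half_square_mono_le_1:
  fixes p x y :: real
  assumes "0 < p" "p \<le> 2" "0 \<le> x" "x \<le> y" "y \<le> 1"
  shows "x powr p - p / 2 * x\<^sup>2 \<le> y powr p - p / 2 * y\<^sup>2"
proof (rule DERIV_nonneg_imp_increasing_open[OF \<open>x \<le> y\<close>])
  fix w assume w: "x < w" "w < y"
  then have "0 < w" "w \<le> 1" using assms by auto
  then have "w \<le> w powr (p - 1)"
    using powr_mono'[of "p - 1" 1 w] assms by simp
  then have "0 \<le> p * w powr (p - 1) - p / 2 * (2 * w)"
    using assms by (simp add: algebra_simps)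
  moreover have "((\<lambda>w. w powr p - p / 2 * w\<^sup>2) has_real_derivative
      p * w powr (p - 1) - p / 2 * (2 * w)) (at w)"
    using \<open>0 < w\<close> by (auto intro!: derivative_eq_intros)
  ultimately show "\<exists>d. ((\<lambda>w. w powr p - p / 2 * w\<^sup>2) has_real_derivative d) (at w) \<and> 0 \<le> d"
    by blast
next
  show "continuous_on {x..y} (\<lambda>w. w powr p - p / 2 * w\<^sup>2)"
    using assms by (intro continuous_intros continuous_on_powr') auto
qed

lemma powr_minus_half_square_antimono_ge_1:
  fixes p x y :: real
  assumes "0 \<le> p" "p \<le> 2" "1 \<le> x" "x \<le> y"
  shows "y powr p - p / 2 * y\<^sup>2 \<le> x powr p - p / 2 * x\<^sup>2"
proof (rule DERIV_nonpos_imp_decreasing_open[OF \<open>x \<le> y\<close>])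
  fix w assume w: "x < w" "w < y"
  then have "1 \<le> w" using assms by auto
  then have "w powr (p - 1) \<le> w"
    using powr_mono[of "p - 1" 1 w] assms by simp
  then have "p * w powr (p - 1) - p / 2 * (2 * w) \<le> 0"
    using assms by (simp add: algebra_simps mult_left_mono)
  moreover have "((\<lambda>w. w powr p - p / 2 * w\<^sup>2) has_real_derivative
      p * w powr (p - 1) - p / 2 * (2 * w)) (at w)"
    using \<open>1 \<le> w\<close> by (auto intro!: derivative_eq_intros)
  ultimately show "\<exists>d. ((\<lambda>w. w powr p - p / 2 * w\<^sup>2) has_real_derivative d) (at w) \<and> d \<le> 0"
    by blast
next
  show "continuous_on {x..y} (\<lambda>w. w powr p - p / 2 * w\<^sup>2)"
    using assms by (intro continuous_intros continuous_on_powr') auto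
qed

lemma one_plus_mult_powr_le_powr:
  fixes p t :: real
  assumes "1 \<le> p" "p \<le> 2" "0 \<le> t"
  shows "1 + (p - 1) * t * (1 + t) powr (p - 2) \<le> (1 + t) powr (p - 1)"
proof -
  have "(1 + t) powr (2 - p) * (1 + t) powr (p - 2) \<le> (1 + (2 - p) * t) * (1 + t) powr (p - 2)"
    using Bernoulli_inequality_powr[of "2 - p" t] assms by (intro mult_right_mono) auto
  moreover have "(1 + t) powr (2 - p) * (1 + t) powr (p - 2) = 1"
    using assms by (simp flip: powr_add)
  moreover have "(1 + t) powr (p - 1) = (1 + t) * (1 + t) powr (p - 2)"
    using assms powr_add[of "1 + t" 1 "p - 2"] by simp
  ultimately show ?thesis by (simp add: algebra_simps)
qed

lemma second_order_bound_plus: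
  fixes p s :: real
  assumes "1 \<le> p" "p \<le> 2" "0 \<le> s"
  shows "p * (p - 1) / 2 * s\<^sup>2 * (1 + s) powr (p - 2) \<le> (1 + s) powr p - 1 - p * s"
proof -
  define C where "C = (1 + s) powr (p - 2)"
  define G where "G t = (1 + t) powr p - 1 - p * t - p * (p - 1) / 2 * t\<^sup>2 * C" for t
  have "G 0 \<le> G s"
  proof (rule DERIV_nonneg_imp_nondecreasing[OF \<open>0 \<le> s\<close>])
    fix t assume t: "0 \<le> t" "t \<le> s"
    have "C \<le> (1 + t) powr (p - 2)"
      unfolding C_def by (rule powr_mono2') (use assms t in auto)
    then have "(p - 1) * t * C \<le> (p - 1) * t * (1 + t) powr (p - 2)"
      using assms t by (intro mult_left_mono) auto
    with one_plus_mult_powr_le_powr[of p t] assms t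
    have "p * (1 + (p - 1) * t * C) \<le> p * (1 + t) powr (p - 1)"
      by (intro mult_left_mono) auto
    moreover have "p * (p - 1) / 2 * (2 * t) * C = p * ((p - 1) * t * C)"
      by simp
    ultimately have "0 \<le> p * (1 + t) powr (p - 1) - p - p * (p - 1) / 2 * (2 * t) * C"
      by (simp add: algebra_simps)
    moreover have "(G has_real_derivative
        p * (1 + t) powr (p - 1) - p - p * (p - 1) / 2 * (2 * t) * C) (at t)"
      unfolding G_def using t by (auto intro!: derivative_eq_intros)
    ultimately show "\<exists>y. (G has_real_derivative y) (at t) \<and> 0 \<le> y" by blast
  qed
  then show ?thesis unfolding G_def C_def by simp
qed

lemma second_order_bound_minus_le_1:
  fixes p s :: real
  assumes "1 \<le> p" "p \<le> 2" "0 \<le> s" "s \<le> 1"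
  shows "p * (p - 1) / 2 * s\<^sup>2 * (1 + s) powr (p - 2) \<le> (1 - s) powr p - 1 + p * s"
proof -
  define C where "C = (1 + s) powr (p - 2)"
  have C: "0 \<le> C" "C \<le> 1"
    unfolding C_def using powr_mono2'[of "p - 2" 1 "1 + s"] assms by auto
  define G where "G t = (1 - t) powr p - 1 + p * t - p * (p - 1) / 2 * t\<^sup>2 * C" for t
  have "G 0 \<le> G s"
  proof (rule DERIV_nonneg_imp_increasing_open[OF \<open>0 \<le> s\<close>])
    fix t assume t: "0 < t" "t < s"
    have "(1 - t) powr (p - 1) \<le> 1 - (p - 1) * t"
      using Bernoulli_inequality_powr[of "p - 1" "- t"] assms t by simp
    moreover have "(p - 1) * t * C \<le> (p - 1) * t"
      using C assms t by (simp add: mult_left_le)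
    ultimately have "p * ((p - 1) * t * C) \<le> p * (1 - (1 - t) powr (p - 1))"
      using assms by (intro mult_left_mono) auto
    moreover have "p * (p - 1) / 2 * (2 * t) * C = p * ((p - 1) * t * C)"
      by simp
    ultimately have "0 \<le> p - p * (1 - t) powr (p - 1) - p * (p - 1) / 2 * (2 * t) * C"
      by (simp add: algebra_simps)
    moreover have "(G has_real_derivative
        p - p * (1 - t) powr (p - 1) - p * (p - 1) / 2 * (2 * t) * C) (at t)"
      unfolding G_def using t assms by (auto intro!: derivative_eq_intros simp: field_simps)
    ultimately show "\<exists>y. (G has_real_derivative y) (at t) \<and> 0 \<le> y" by blast
  next
    show "continuous_on {0..s} G"
      unfolding G_def using assms by (intro continuous_intros continuous_on_powr') auto
  qed
  then show ?thesis unfolding G_def C_def by simp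
qed

lemma second_order_bound_minus_ge_1:
  fixes p s :: real
  assumes "1 < p" "p \<le> 2" "1 \<le> s"
  shows "p * (p - 1) / 2 * s\<^sup>2 * (1 + s) powr (p - 2) \<le> (s - 1) powr p - 1 + p * s"
proof -
  define k where "k = p * (p - 1) / 2"
  have "p * (p - 1) \<le> 2 * (p - 1)" "p * (p - 1) \<le> 2 * 1"
    by (rule mult_mono; use assms in auto)+
  then have k: "0 \<le> k" "k \<le> 1" "k \<le> p - 1"
    using assms unfolding k_def by auto
  define T where "T t = (t - 1) powr p + p * t - 1 - k * t powr p" for t
  have "T 1 \<le> T s"
  proof (rule DERIV_nonneg_imp_increasing_open[OF \<open>1 \<le> s\<close>])
    fix t assume t: "1 < t" "t < s"
    have "k * t powr (p - 1) \<le> t powr (p - 1)"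
      using k mult_right_mono[of k 1 "t powr (p - 1)"] by simp
    also have "t powr (p - 1) \<le> (t - 1) powr (p - 1) + 1"
      using powr_add_le_add_powr[of "t - 1" 1 "p - 1"] assms t by simp
    finally have "p * (k * t powr (p - 1)) \<le> p * ((t - 1) powr (p - 1) + 1)"
      using assms by (intro mult_left_mono) auto
    then have "0 \<le> p * (t - 1) powr (p - 1) + p - k * (p * t powr (p - 1))"
      by (simp add: algebra_simps)
    moreover have "(T has_real_derivative
        p * (t - 1) powr (p - 1) + p - k * (p * t powr (p - 1))) (at t)"
      unfolding T_def using t by (auto intro!: derivative_eq_intros simp: algebra_simps)
    ultimately show "\<exists>y. (T has_real_derivative y) (at t) \<and> 0 \<le> y" by blast
  next
    show "continuous_on {1..s} T"
      unfolding T_def using assms by (intro continuous_intros continuous_on_powr') auto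
  qed
  then have "k * s powr p \<le> (s - 1) powr p + p * s - 1"
    using k unfolding T_def by simp
  moreover have "k * s\<^sup>2 * (1 + s) powr (p - 2) \<le> k * s\<^sup>2 * s powr (p - 2)"
    using powr_mono2'[of "p - 2" s "1 + s"] k assms by (intro mult_left_mono) auto
  moreover have "s\<^sup>2 * s powr (p - 2) = s powr p"
    using power2_mult_powr[of s "p - 2"] assms by simp
  ultimately show ?thesis unfolding k_def by (simp add: mult.assoc)
qed

lemma second_order_bound_minus:
  fixes p s :: real
  assumes "1 < p" "p \<le> 2" "0 \<le> s"
  shows "p * (p - 1) / 2 * s\<^sup>2 * (1 + s) powr (p - 2) \<le> \<bar>1 - s\<bar> powr p - 1 + p * s"
  using second_order_bound_minus_le_1[of p s] second_order_bound_minus_ge_1[of p s] assms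
  by (cases "s \<le> 1") (auto simp: abs_if)

lemma Psi_eq_scaled:
  fixes a b :: "real ^ 'd"
  assumes "a \<noteq> 0" "norm b = norm a * s" "norm (a + b) = norm a * w" "0 \<le> w"
  shows "Psi a b p = norm a powr p * (w powr p - p / 2 * w\<^sup>2 + p / 2 * (1 + s\<^sup>2) - 1)"
proof -
  define r where "r = norm a"
  have r: "0 < r" using assms unfolding r_def by simp
  have "(norm (a + b))\<^sup>2 = r\<^sup>2 + 2 * (a \<bullet> b) + (norm b)\<^sup>2"
    unfolding r_def power2_norm_eq_inner by (simp add: inner_add inner_commute)
  then have inner: "a \<bullet> b = r\<^sup>2 * (w\<^sup>2 - 1 - s\<^sup>2) / 2"
    using assms unfolding r_def[symmetric] by (simp add: field_simps power_mult_distrib)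
  have "Psi a b p = (r * w) powr p - r powr p - p * r powr (p - 2) * (r\<^sup>2 * (w\<^sup>2 - 1 - s\<^sup>2) / 2)"
    unfolding Psi_def using assms inner unfolding r_def by simp
  also have "\<dots> = r powr p * w powr p - r powr p
      - p * (r\<^sup>2 * r powr (p - 2)) * (w\<^sup>2 - 1 - s\<^sup>2) / 2"
    using r assms by (simp add: powr_mult)
  also have "\<dots> = r powr p * (w powr p - p / 2 * w\<^sup>2 + p / 2 * (1 + s\<^sup>2) - 1)"
    using power2_mult_powr[OF r, of "p - 2"] by (simp add: field_simps)
  finally show ?thesis unfolding r_def .
qed

lemma Psi_ge_second_order:
  fixes a b :: "real ^ 'd"
  assumes p: "1 < p" "p \<le> 2" and "a \<noteq> 0"
  shows "norm a powr p * (p * (p - 1) / 2 * (norm b / norm a)\<^sup>2 * (1 + norm b / norm a) powr (p - 2))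
    \<le> Psi a b p"
proof -
  define r s w where "r = norm a" and "s = norm b / r" and "w = norm (a + b) / r"
  have r: "0 < r" using assms unfolding r_def by simp
  have s: "0 \<le> s" and nb: "norm b = r * s" and nab: "norm (a + b) = r * w" and "0 \<le> w"
    using r unfolding s_def w_def by auto
  have "norm (a + b) \<le> r + norm b" "r \<le> norm (a + b) + norm b" "norm b \<le> norm (a + b) + r"
    using norm_triangle_ineq[of a b] norm_triangle_ineq[of "a + b" "- b"]
      norm_triangle_ineq[of "a + b" "- a"]
    unfolding r_def by simp_all
  then have "r * w \<le> r * (1 + s)" "r * 1 \<le> r * (w + s)" "r * s \<le> r * (w + 1)"
    unfolding nab nb by (simp_all add: algebra_simps)
  then have w: "\<bar>1 - s\<bar> \<le> w" "w \<le> 1 + s"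
    using r by (auto simp: mult_le_cancel_left_pos)
  define Q where "Q x = x powr p - p / 2 * x\<^sup>2 + p / 2 * (1 + s\<^sup>2) - 1" for x
  have "Q \<bar>1 - s\<bar> = \<bar>1 - s\<bar> powr p - 1 + p * s" "Q (1 + s) = (1 + s) powr p - 1 - p * s"
    unfolding Q_def by (simp_all add: power2_eq_square algebra_simps)
  then have "p * (p - 1) / 2 * s\<^sup>2 * (1 + s) powr (p - 2) \<le> Q w"
    using second_order_bound_minus[of p s] second_order_bound_plus[of p s]
      powr_minus_half_square_mono_le_1[of p "\<bar>1 - s\<bar>" w]
      powr_minus_half_square_antimono_ge_1[of p w "1 + s"] w p s
    unfolding Q_def by (cases "w \<le> 1") auto
  then have "r powr p * (p * (p - 1) / 2 * s\<^sup>2 * (1 + s) powr (p - 2)) \<le> r powr p * Q w"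
    by (intro mult_left_mono) auto
  also have "r powr p * Q w = Psi a b p"
    using Psi_eq_scaled[OF \<open>a \<noteq> 0\<close>, of b s w p] nb nab \<open>0 \<le> w\<close>
    unfolding Q_def r_def by simp
  finally show ?thesis unfolding s_def r_def .
qed

lemma Gamma_le_Psi:
  fixes a b :: "real ^ 'd"
  assumes p: "1 < p" "p \<le> 2"
    and small: "\<And>s. 0 \<le> s \<Longrightarrow> s < vartheta \<epsilon> p \<Longrightarrow>
      p * \<epsilon> \<le> p * (p - 1) / 2 * (1 + s) powr (p - 2)"
    and large: "\<And>s. 0 \<le> s \<Longrightarrow> vartheta \<epsilon> p \<le> s \<Longrightarrow>
      2 * K * p * s \<le> p * (p - 1) / 2 * s\<^sup>2 * (1 + s) powr (p - 2)"
  shows "Gamma a b K \<epsilon> p \<le> Psi a b p"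
proof (cases "a = 0")
  case True
  then show ?thesis unfolding Gamma_def Psi_def using p by simp
next
  case False
  define r s where "r = norm a" and "s = norm b / r"
  have r: "0 < r" using False unfolding r_def by simp
  have s: "0 \<le> s" and nb: "norm b = r * s" using r unfolding s_def by auto
  have "r powr (p - 1) * (r * s) = r powr p * s" "r powr (p - 2) * (r * s)\<^sup>2 = r powr p * s\<^sup>2"
    using r power2_mult_powr[OF r, of "p - 2"] powr_add[of r "p - 1" 1]
    by (simp_all add: power_mult_distrib mult_ac)
  moreover have "vartheta \<epsilon> p * r \<le> r * s \<longleftrightarrow> vartheta \<epsilon> p \<le> s"
    using r by (simp add: mult.commute)
  ultimately have Gamma: "Gamma a b K \<epsilon> p
      = r powr p * (if vartheta \<epsilon> p \<le> s then 2 * K * p * s else p * \<epsilon> * s\<^sup>2)"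
    unfolding Gamma_def r_def[symmetric] nb by auto
  have "(if vartheta \<epsilon> p \<le> s then 2 * K * p * s else p * \<epsilon> * s\<^sup>2)
      \<le> p * (p - 1) / 2 * s\<^sup>2 * (1 + s) powr (p - 2)"
  proof (cases "vartheta \<epsilon> p \<le> s")
    case False
    then have "s\<^sup>2 * (p * \<epsilon>) \<le> s\<^sup>2 * (p * (p - 1) / 2 * (1 + s) powr (p - 2))"
      using small[OF s] by (intro mult_left_mono) auto
    then show ?thesis using False by (simp add: mult_ac)
  qed (use large[OF s] in auto)
  then have "Gamma a b K \<epsilon> p \<le> r powr p * (p * (p - 1) / 2 * s\<^sup>2 * (1 + s) powr (p - 2))"
    unfolding Gamma by (intro mult_left_mono) auto
  also have "\<dots> \<le> Psi a b p"
    using Psi_ge_second_order[OF p False, of b] unfolding r_def s_def .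
  finally show ?thesis .
qed

lemma vartheta_eq_sqrt:
  fixes p M :: real
  assumes "1 < p" "p < 2" "0 < M"
  shows "vartheta ((p - 1) / 2 * M powr ((p - 2) / 2)) p = sqrt (M / 2 + 1 / 2) - 1"
proof -
  have "(2 - p) / 2 = - ((p - 2) / 2)"
    by (simp add: field_simps)
  then have "M powr ((2 - p) / 2) = M powr (- ((p - 2) / 2))"
    by (rule arg_cong)
  then have "(p - 1) / (2 * ((p - 1) / 2 * M powr ((p - 2) / 2))) = M powr ((2 - p) / 2)"
    using assms by (simp add: powr_minus_divide)
  moreover have "(2 - p) / 2 * (2 / (2 - p)) = 1"
    using assms by (simp add: field_simps)
  then have "(M powr ((2 - p) / 2)) powr (2 / (2 - p)) = M"
    using assms by (simp only: powr_powr) simp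
  ultimately show ?thesis unfolding vartheta_def by simp
qed

lemma small_regime_bound:
  fixes p M s :: real
  assumes "1 < p" "p < 2" "1 \<le> M" "0 \<le> s"
    and "s < vartheta ((p - 1) / 2 * M powr ((p - 2) / 2)) p"
  shows "p * ((p - 1) / 2 * M powr ((p - 2) / 2)) \<le> p * (p - 1) / 2 * (1 + s) powr (p - 2)"
proof -
  have "1 + s < sqrt (M / 2 + 1 / 2)"
    using assms vartheta_eq_sqrt[of p M] by simp
  then have "(1 + s)\<^sup>2 < (sqrt (M / 2 + 1 / 2))\<^sup>2"
    using assms by (intro power_strict_mono) auto
  then have "(1 + s)\<^sup>2 < M / 2 + 1 / 2"
    using assms by simp
  then have "M powr ((p - 2) / 2) \<le> (1 + s) powr (p - 2)"
    using powr_le_powr_of_square_le[of "1 + s" M "p - 2"] assms by simp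
  then show ?thesis
    using assms by (simp add: mult_left_mono)
qed

lemma large_regime_bound:
  fixes p c s :: real
  assumes "1 < p" "p \<le> 2" "0 \<le> c" "1 \<le> s"
    and "(c / (p * (p - 1) / 2 * 2 powr (p - 2))) powr (1 / (p - 1)) \<le> s"
  shows "c * s \<le> p * (p - 1) / 2 * s\<^sup>2 * (1 + s) powr (p - 2)"
proof -
  define k where "k = p * (p - 1) / 2 * 2 powr (p - 2)"
  have k: "0 < k" unfolding k_def using assms by simp
  have "c / k = ((c / k) powr (1 / (p - 1))) powr (p - 1)"
    using assms k by (simp add: powr_powr)
  also have "\<dots> \<le> s powr (p - 1)"
    using assms unfolding k_def by (intro powr_mono2) auto
  finally have "c * s \<le> k * s powr (p - 1) * s"
    using k assms by (simp add: divide_le_eq mult_ac mult_right_mono)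
  also have "k * s powr (p - 1) * s = p * (p - 1) / 2 * s\<^sup>2 * (2 * s) powr (p - 2)"
    using assms power2_mult_powr[of s "p - 2"] powr_add[of s "p - 1" 1]
    unfolding k_def by (simp add: powr_mult mult_ac)
  also have "\<dots> \<le> p * (p - 1) / 2 * s\<^sup>2 * (1 + s) powr (p - 2)"
    using assms powr_mono2'[of "p - 2" "1 + s" "2 * s"] by (intro mult_left_mono) auto
  finally show ?thesis .
qed

theorem lemma5:
  fixes K p :: real
  assumes "K \<ge> 0" and "1 < p" and "p < 2"
  shows "\<exists>\<epsilon>. 0 < \<epsilon> \<and> \<epsilon> < (p - 1) / 2 \<and>
           (\<forall>a b :: real ^ 'd. Psi a b p \<ge> Gamma a b K \<epsilon> p)"
proof -
  define \<theta> where "\<theta> = max 1 ((2 * K * p / (p * (p - 1) / 2 * 2 powr (p - 2))) powr (1 / (p - 1)))"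
  define M where "M = 2 * (\<theta> + 1)\<^sup>2"
  \<comment> \<open>this makes \<open>\<vartheta> \<epsilon> p = sqrt (M/2 + 1/2) - 1 \<ge> \<theta>\<close>\<close>
  define \<epsilon> where "\<epsilon> = (p - 1) / 2 * M powr ((p - 2) / 2)"
  have "1 \<le> \<theta>" unfolding \<theta>_def by simp
  then have "2 * 2\<^sup>2 \<le> M" unfolding M_def by (intro mult_left_mono power_mono) auto
  then have "1 < M" by simp
  then have "0 < \<epsilon>" "\<epsilon> < (p - 1) / 2"
    unfolding \<epsilon>_def using assms powr_less_mono2_neg[of "(p - 2) / 2" 1 M] by auto
  have "\<theta> + 1 \<le> sqrt (M / 2 + 1 / 2)"
    using \<open>1 \<le> \<theta>\<close> real_sqrt_le_mono[of "(\<theta> + 1)\<^sup>2" "M / 2 + 1 / 2"] unfolding M_def by simp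
  then have "\<theta> \<le> vartheta \<epsilon> p"
    using vartheta_eq_sqrt[of p M] assms \<open>1 < M\<close> unfolding \<epsilon>_def by simp
  then have "Gamma a b K \<epsilon> p \<le> Psi a b p" for a b :: "real ^ 'd"
    using assms \<open>1 < M\<close>
    by (intro Gamma_le_Psi small_regime_bound[of p M, folded \<epsilon>_def] large_regime_bound)
      (auto simp: \<theta>_def)
  with \<open>0 < \<epsilon>\<close> \<open>\<epsilon> < (p - 1) / 2\<close> show ?thesis by blast
qed

end
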